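(* For $n,m\ge0$, let $S_{n,m}$ be the signed graph obtained from disjoint copies of the star graphs $S_n$ and $S_m$ by joining their center vertices with a negative edge. Then $$X_{S_{n,m}}=\sum_{i=0}^{n}\sum_{j=0}^{m}\binom{n}{i}\binom{m}{j}(-1)^{i+j}p_{1,0}^{n+m-i-j}\bigl(p_{i+1,0}p_{j+1,0}-p_{i+1,j+1}\bigr).$$
   Context: $S_k$ ($k\ge0$) is the star signed graph with $k+1$ vertices: a center vertex joined by $k$ positive edges to $k$ other vertices. For a signed graph $\Sigma$ (finite graph with edge signs in $\{+,-\}$), a coloring $\kappa:V(\Sigma)\to\mathbb{Z}$ is proper if $\kappa(u)\ne\mathrm{sgn}(e)\kappa(v)$ for every edge $e$ with endpoints $u,v$, and $X_\Sigma=\sum_{\kappa\text{ proper}}\prod_{v}x_{\kappa(v)}$ in commuting variables $x_i$, $i\in\mathbb{Z}$. $p_{a,b}=\sum_{i\in\mathbb{Z}}x_i^ax_{-i}^b$. *)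

theory Defs
  imports Main "HOL-Library.FuncSet" "HOL-Library.Poly_Mapping"
begin

text \<open>Formal power series in the commuting variables x_i (i in Z) with integer
coefficients, represented by their coefficient functions: a monomial
prod_i x_i^(alpha i) is a finitely supported exponent map alpha :: int =>0 nat.\<close>

type_synonym msf = "(int \<Rightarrow>\<^sub>0 nat) \<Rightarrow> int"

definition msf_one :: msf where
  "msf_one \<alpha> = (if \<alpha> = 0 then 1 else 0)"

text \<open>Cauchy product; the index set is finite since beta + gamma = alpha.\<close>
definition msf_mult :: "msf \<Rightarrow> msf \<Rightarrow> msf" where
  "msf_mult f g \<alpha> = (\<Sum>(\<beta>, \<gamma>) \<in> {(\<beta>, \<gamma>). \<beta> + \<gamma> = \<alpha>}. f \<beta> * g \<gamma>)"

primrec msf_pow :: "msf \<Rightarrow> nat \<Rightarrow> msf" where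
  "msf_pow f 0 = msf_one"
| "msf_pow f (Suc k) = msf_mult f (msf_pow f k)"

text \<open>Power sum p_{a,b} = sum_{i in Z} x_i^a x_{-i}^b.\<close>
definition pab :: "nat \<Rightarrow> nat \<Rightarrow> msf" where
  "pab a b \<alpha> = int (card {i::int. \<alpha> = Poly_Mapping.single i a + Poly_Mapping.single (- i) b})"

text \<open>A signed graph: finite vertex set and a set of edges (u, v, sign),
sign True = positive, False = negative.\<close>
type_synonym 'v sgraph = "'v set \<times> ('v \<times> 'v \<times> bool) set"

definition proper_col :: "'v sgraph \<Rightarrow> ('v \<Rightarrow> int) \<Rightarrow> bool" where
  "proper_col G \<kappa> \<longleftrightarrow> (\<forall>(u, v, s) \<in> snd G. \<kappa> u \<noteq> (if s then \<kappa> v else - \<kappa> v))"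

definition proper_colorings :: "'v sgraph \<Rightarrow> ('v \<Rightarrow> int) set" where
  "proper_colorings G = {\<kappa> \<in> fst G \<rightarrow>\<^sub>E (UNIV :: int set). proper_col G \<kappa>}"

definition chrom_sym :: "'v sgraph \<Rightarrow> msf" where
  "chrom_sym G \<alpha> = int (card {\<kappa> \<in> proper_colorings G.
        \<forall>c. Poly_Mapping.lookup \<alpha> c = card {v \<in> fst G. \<kappa> v = c}})"

definition double_star :: "nat \<Rightarrow> nat \<Rightarrow> nat sgraph" where
  "double_star n m =
     ({0..n+m+1},
      {(0, v, True) | v. v \<in> {1..n}}
      \<union> {(n+1, v, True) | v. v \<in> {n+2..n+m+1}}
      \<union> {(0, n+1, False)})"

end

theory Submission
  imports Defs
begin

(* X_{S_{n,m}} is the generating function, over all colorings, of the indicator of properness.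
  Properness of a positive edge between a leaf l and its center c is the factor 1 - [\<kappa> l = \<kappa> c];
  expanding these products leaves, for every set I of leaves of S_n and J of leaves of S_m, the
  colorings in which the leaves in I take the color a of their center, those in J the color b of
  theirs, and a \<noteq> -b. Each of the n + m - |I| - |J| other leaves is free and contributes a factor
  p_{1,0}; the two monochromatic blocks contribute p_{|I|+1,0} p_{|J|+1,0}, minus p_{|I|+1,|J|+1}
  for the colorings with b = -a. Grouping I and J by size gives the binomial coefficients. *)

definition coloring_monomial :: "'v set \<Rightarrow> ('v \<Rightarrow> int) \<Rightarrow> (int \<Rightarrow>\<^sub>0 nat)" where
  "coloring_monomial V \<kappa> = (\<Sum>v\<in>V. Poly_Mapping.single (\<kappa> v) 1)"

definition colorings_with_monomial :: "'v set \<Rightarrow> (int \<Rightarrow>\<^sub>0 nat) \<Rightarrow> ('v \<Rightarrow> int) set" where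
  "colorings_with_monomial V \<alpha> = {\<kappa> \<in> V \<rightarrow>\<^sub>E UNIV. coloring_monomial V \<kappa> = \<alpha>}"

(* Coefficients of the series \<Sum>\<kappa> \<in> V \<rightarrow> \<int>. W \<kappa> * (\<Prod>v\<in>V. x_(\<kappa> v)). *)
definition coloring_gf :: "'v set \<Rightarrow> (('v \<Rightarrow> int) \<Rightarrow> int) \<Rightarrow> msf" where
  "coloring_gf V W \<alpha> = (\<Sum>\<kappa>\<in>colorings_with_monomial V \<alpha>. W \<kappa>)"

lemma lookup_coloring_monomial:
  "finite V \<Longrightarrow> Poly_Mapping.lookup (coloring_monomial V \<kappa>) c = card {v\<in>V. \<kappa> v = c}"
  by (simp add: coloring_monomial_def lookup_sum lookup_single when_def sum.If_cases Int_def)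

lemma coloring_monomial_eq_iff:
  "finite V \<Longrightarrow> coloring_monomial V \<kappa> = \<alpha> \<longleftrightarrow> (\<forall>c. Poly_Mapping.lookup \<alpha> c = card {v\<in>V. \<kappa> v = c})"
  by (metis lookup_coloring_monomial poly_mapping_eqI)

lemma coloring_monomial_restrict: "coloring_monomial V (restrict \<kappa> V) = coloring_monomial V \<kappa>"
  unfolding coloring_monomial_def by (rule sum.cong) auto

lemma coloring_monomial_Un:
  "finite V \<Longrightarrow> finite U \<Longrightarrow> V \<inter> U = {} \<Longrightarrow>
    coloring_monomial (V \<union> U) \<kappa> = coloring_monomial V \<kappa> + coloring_monomial U \<kappa>"
  unfolding coloring_monomial_def by (rule sum.union_disjoint)

lemma finite_colorings_with_monomial:
  assumes "finite V"
  shows "finite (colorings_with_monomial V \<alpha>)"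
proof (rule finite_subset)
  show "colorings_with_monomial V \<alpha> \<subseteq> V \<rightarrow>\<^sub>E Poly_Mapping.keys \<alpha>"
  proof
    fix \<kappa> assume \<kappa>: "\<kappa> \<in> colorings_with_monomial V \<alpha>"
    have "\<kappa> v \<in> Poly_Mapping.keys \<alpha>" if "v \<in> V" for v
    proof -
      have "Poly_Mapping.lookup \<alpha> (\<kappa> v) = card {w\<in>V. \<kappa> w = \<kappa> v}"
        using \<kappa> assms by (auto simp: colorings_with_monomial_def coloring_monomial_eq_iff)
      moreover have "card {w\<in>V. \<kappa> w = \<kappa> v} > 0"
        using that assms by (subst card_gt_0_iff) auto
      ultimately show ?thesis by (simp add: in_keys_iff)
    qed
    then show "\<kappa> \<in> V \<rightarrow>\<^sub>E Poly_Mapping.keys \<alpha>"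
      using \<kappa> by (auto simp: colorings_with_monomial_def PiE_iff)
  qed
qed (intro finite_PiE assms Poly_Mapping.finite_keys)

lemma finite_pointwise_le:
  "finite {\<beta> :: 'a \<Rightarrow>\<^sub>0 nat. \<forall>k. Poly_Mapping.lookup \<beta> k \<le> Poly_Mapping.lookup \<alpha> k}" (is "finite ?B")
proof -
  let ?K = "Poly_Mapping.keys \<alpha>"
  have "inj_on (\<lambda>\<beta>. restrict (Poly_Mapping.lookup \<beta>) ?K) ?B"
  proof (rule inj_onI, rule poly_mapping_eqI)
    fix \<beta> \<gamma> k
    assume \<beta>: "\<beta> \<in> ?B" and \<gamma>: "\<gamma> \<in> ?B"
      and eq: "restrict (Poly_Mapping.lookup \<beta>) ?K = restrict (Poly_Mapping.lookup \<gamma>) ?K"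
    show "Poly_Mapping.lookup \<beta> k = Poly_Mapping.lookup \<gamma> k"
    proof (cases "k \<in> ?K")
      case True
      then show ?thesis using fun_cong[OF eq, of k] by simp
    next
      case False
      then show ?thesis using \<beta> \<gamma> by (metis (mono_tags) in_keys_iff le_zero_eq mem_Collect_eq)
    qed
  qed
  moreover have "(\<lambda>\<beta>. restrict (Poly_Mapping.lookup \<beta>) ?K) ` ?B \<subseteq>
      ?K \<rightarrow>\<^sub>E {0..Max (Poly_Mapping.lookup \<alpha> ` ?K)}"
    by (auto simp: PiE_iff)
      (meson Max_ge dual_order.trans finite_imageI Poly_Mapping.finite_keys imageI)
  ultimately show ?thesis
    by (meson finite_PiE finite_atLeastAtMost finite_imageD Poly_Mapping.finite_keys finite_subset)
qed

lemma finite_add_decompositions: "finite {(\<beta> :: 'a \<Rightarrow>\<^sub>0 nat, \<gamma>). \<beta> + \<gamma> = \<alpha>}"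
proof (rule finite_subset)
  let ?B = "{\<beta> :: 'a \<Rightarrow>\<^sub>0 nat. \<forall>k. Poly_Mapping.lookup \<beta> k \<le> Poly_Mapping.lookup \<alpha> k}"
  show "{(\<beta>, \<gamma>). \<beta> + \<gamma> = \<alpha>} \<subseteq> ?B \<times> ?B"
    by (auto simp: lookup_add)
  show "finite (?B \<times> ?B)"
    using finite_pointwise_le by blast
qed

lemma bij_betw_restrict_pair:
  assumes V: "finite V" and U: "finite U" and disj: "V \<inter> U = {}"
  shows "bij_betw (\<lambda>\<kappa>. (restrict \<kappa> V, restrict \<kappa> U)) (colorings_with_monomial (V \<union> U) \<alpha>)
           {(\<kappa>\<^sub>1, \<kappa>\<^sub>2) \<in> (V \<rightarrow>\<^sub>E UNIV) \<times> (U \<rightarrow>\<^sub>E UNIV).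
              coloring_monomial V \<kappa>\<^sub>1 + coloring_monomial U \<kappa>\<^sub>2 = \<alpha>}"
    (is "bij_betw _ _ ?Q")
proof -
  let ?merge = "\<lambda>(\<kappa>\<^sub>1, \<kappa>\<^sub>2) v. if v \<in> V then \<kappa>\<^sub>1 v else \<kappa>\<^sub>2 v"
  have merge: "?merge x \<in> colorings_with_monomial (V \<union> U) \<alpha>" if "x \<in> ?Q" for x
  proof -
    obtain \<kappa>\<^sub>1 \<kappa>\<^sub>2 where x: "x = (\<kappa>\<^sub>1, \<kappa>\<^sub>2)" by fastforce
    have "coloring_monomial V (?merge x) = coloring_monomial V \<kappa>\<^sub>1"
      unfolding coloring_monomial_def x by (rule sum.cong) auto
    moreover have "coloring_monomial U (?merge x) = coloring_monomial U \<kappa>\<^sub>2"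
      unfolding coloring_monomial_def x using disj by (intro sum.cong) auto
    ultimately show ?thesis
      using that assms
      by (auto simp: x colorings_with_monomial_def coloring_monomial_Un PiE_iff extensional_def)
  qed
  show ?thesis
  proof (rule bij_betwI[where g = ?merge])
    show "(\<lambda>\<kappa>. (restrict \<kappa> V, restrict \<kappa> U)) \<in> colorings_with_monomial (V \<union> U) \<alpha> \<rightarrow> ?Q"
      using assms
      by (auto simp: colorings_with_monomial_def coloring_monomial_restrict coloring_monomial_Un)
  qed (use merge disj in
      \<open>auto simp: colorings_with_monomial_def PiE_iff extensional_def fun_eq_iff\<close>)
qed

lemma coloring_gf_mult_disjoint:
  assumes V: "finite V" and U: "finite U" and disj: "V \<inter> U = {}"
  shows "msf_mult (coloring_gf V W\<^sub>1) (coloring_gf U W\<^sub>2) =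
           coloring_gf (V \<union> U) (\<lambda>\<kappa>. W\<^sub>1 (restrict \<kappa> V) * W\<^sub>2 (restrict \<kappa> U))"
proof
  fix \<alpha> :: "int \<Rightarrow>\<^sub>0 nat"
  let ?P = "{(\<beta> :: int \<Rightarrow>\<^sub>0 nat, \<gamma>). \<beta> + \<gamma> = \<alpha>}"
  let ?Q = "{(\<kappa>\<^sub>1, \<kappa>\<^sub>2) \<in> (V \<rightarrow>\<^sub>E UNIV) \<times> (U \<rightarrow>\<^sub>E UNIV).
              coloring_monomial V \<kappa>\<^sub>1 + coloring_monomial U \<kappa>\<^sub>2 = \<alpha>}"
  let ?mon = "\<lambda>(\<kappa>\<^sub>1, \<kappa>\<^sub>2). (coloring_monomial V \<kappa>\<^sub>1, coloring_monomial U \<kappa>\<^sub>2)"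
  let ?W = "\<lambda>(\<kappa>\<^sub>1, \<kappa>\<^sub>2). W\<^sub>1 \<kappa>\<^sub>1 * W\<^sub>2 \<kappa>\<^sub>2"
  have bij: "bij_betw (\<lambda>\<kappa>. (restrict \<kappa> V, restrict \<kappa> U)) (colorings_with_monomial (V \<union> U) \<alpha>) ?Q"
    using bij_betw_restrict_pair[OF assms] .
  have fibre: "{x \<in> ?Q. ?mon x = (\<beta>, \<gamma>)} =
      colorings_with_monomial V \<beta> \<times> colorings_with_monomial U \<gamma>"
    if "\<beta> + \<gamma> = \<alpha>" for \<beta> \<gamma>
    using that by (auto simp: colorings_with_monomial_def)
  have "msf_mult (coloring_gf V W\<^sub>1) (coloring_gf U W\<^sub>2) \<alpha> = (\<Sum>y\<in>?P. sum ?W {x \<in> ?Q. ?mon x = y})"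
    unfolding msf_mult_def
  proof (rule sum.cong[OF refl])
    fix y assume "y \<in> ?P"
    then obtain \<beta> \<gamma> where y: "y = (\<beta>, \<gamma>)" "\<beta> + \<gamma> = \<alpha>" by auto
    then show "(case y of (\<beta>, \<gamma>) \<Rightarrow> coloring_gf V W\<^sub>1 \<beta> * coloring_gf U W\<^sub>2 \<gamma>) =
        sum ?W {x \<in> ?Q. ?mon x = y}"
      unfolding y(1) fibre[OF y(2)] by (simp add: coloring_gf_def sum_product sum.cartesian_product)
  qed
  also have "\<dots> = sum ?W ?Q"
  proof (rule sum.group)
    show "finite ?Q"
      using bij_betw_finite[OF bij] finite_colorings_with_monomial[of "V \<union> U"] V U by simp
  qed (auto simp: finite_add_decompositions)
  also have "\<dots> = coloring_gf (V \<union> U) (\<lambda>\<kappa>. W\<^sub>1 (restrict \<kappa> V) * W\<^sub>2 (restrict \<kappa> U)) \<alpha>"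
    unfolding coloring_gf_def by (subst sum.reindex_bij_betw[OF bij, symmetric]) simp
  finally show "msf_mult (coloring_gf V W\<^sub>1) (coloring_gf U W\<^sub>2) \<alpha> =
      coloring_gf (V \<union> U) (\<lambda>\<kappa>. W\<^sub>1 (restrict \<kappa> V) * W\<^sub>2 (restrict \<kappa> U)) \<alpha>" .
qed

lemma coloring_gf_sum: "coloring_gf V (\<lambda>\<kappa>. \<Sum>x\<in>X. W x \<kappa>) \<alpha> = (\<Sum>x\<in>X. coloring_gf V (W x) \<alpha>)"
  unfolding coloring_gf_def by (rule sum.swap)

lemma coloring_gf_cmult: "coloring_gf V (\<lambda>\<kappa>. c * W \<kappa>) \<alpha> = c * coloring_gf V W \<alpha>"
  unfolding coloring_gf_def by (simp add: sum_distrib_left)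

lemma coloring_gf_diff:
  "coloring_gf V (\<lambda>\<kappa>. W\<^sub>1 \<kappa> - W\<^sub>2 \<kappa>) \<alpha> = coloring_gf V W\<^sub>1 \<alpha> - coloring_gf V W\<^sub>2 \<alpha>"
  unfolding coloring_gf_def by (simp add: sum_subtractf)

lemma sum_of_bool_eq_card: "finite S \<Longrightarrow> (\<Sum>x\<in>S. of_bool (P x)) = of_nat (card {x\<in>S. P x})"
  by (simp add: sum.If_cases Int_def)

lemma chrom_sym_eq_coloring_gf:
  assumes "finite (fst \<Sigma>)"
  shows "chrom_sym \<Sigma> = coloring_gf (fst \<Sigma>) (\<lambda>\<kappa>. of_bool (proper_col \<Sigma> \<kappa>))"
proof
  fix \<alpha> :: "int \<Rightarrow>\<^sub>0 nat"
  have "{\<kappa> \<in> colorings_with_monomial (fst \<Sigma>) \<alpha>. proper_col \<Sigma> \<kappa>} =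
      {\<kappa> \<in> proper_colorings \<Sigma>. \<forall>c. Poly_Mapping.lookup \<alpha> c = card {v \<in> fst \<Sigma>. \<kappa> v = c}}"
    using assms
    by (auto simp: colorings_with_monomial_def proper_colorings_def coloring_monomial_eq_iff)
  moreover have "coloring_gf (fst \<Sigma>) (\<lambda>\<kappa>. of_bool (proper_col \<Sigma> \<kappa>)) \<alpha> =
      of_nat (card {\<kappa> \<in> colorings_with_monomial (fst \<Sigma>) \<alpha>. proper_col \<Sigma> \<kappa>})"
    unfolding coloring_gf_def
    using assms by (intro sum_of_bool_eq_card finite_colorings_with_monomial)
  ultimately show "chrom_sym \<Sigma> \<alpha> = coloring_gf (fst \<Sigma>) (\<lambda>\<kappa>. of_bool (proper_col \<Sigma> \<kappa>)) \<alpha>"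
    by (simp add: chrom_sym_def)
qed

lemma coloring_gf_opposite_blocks:
  assumes A: "finite A" and B: "finite B" and disj: "A \<inter> B = {}" and a: "a \<in> A"
  shows "coloring_gf (A \<union> B) (\<lambda>\<kappa>. of_bool (\<forall>v\<in>A. \<kappa> v = \<kappa> a) * of_bool (\<forall>v\<in>B. \<kappa> v = - \<kappa> a))
           = pab (card A) (card B)"
proof
  fix \<alpha> :: "int \<Rightarrow>\<^sub>0 nat"
  let ?P = "\<lambda>\<kappa>. (\<forall>v\<in>A. \<kappa> v = \<kappa> a) \<and> (\<forall>v\<in>B. \<kappa> v = - \<kappa> a)"
  let ?C = "{c. \<alpha> = Poly_Mapping.single c (card A) + Poly_Mapping.single (- c) (card B)}"
  define \<kappa>\<^sub>c where "\<kappa>\<^sub>c c = (\<lambda>v. if v \<in> A then c else if v \<in> B then - c else undefined)" for c :: int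
  have monomial: "coloring_monomial (A \<union> B) (\<kappa>\<^sub>c c) =
      Poly_Mapping.single c (card A) + Poly_Mapping.single (- c) (card B)" for c
  proof (rule poly_mapping_eqI)
    fix d
    have "{v \<in> A \<union> B. \<kappa>\<^sub>c c v = d} = (if c = d then A else {}) \<union> (if - c = d then B else {})"
      using disj by (auto simp: \<kappa>\<^sub>c_def)
    then show "Poly_Mapping.lookup (coloring_monomial (A \<union> B) (\<kappa>\<^sub>c c)) d =
        Poly_Mapping.lookup (Poly_Mapping.single c (card A) + Poly_Mapping.single (- c) (card B)) d"
      using A B disj
      by (simp add: lookup_coloring_monomial card_Un_disjoint lookup_add lookup_single when_def)
  qed
  have coloring: "\<kappa>\<^sub>c (\<kappa> a) = \<kappa>" if "\<kappa> \<in> colorings_with_monomial (A \<union> B) \<alpha>" "?P \<kappa>" for \<kappa>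
    using that disj
    by (auto simp: colorings_with_monomial_def \<kappa>\<^sub>c_def PiE_iff extensional_def fun_eq_iff)
  have "bij_betw \<kappa>\<^sub>c ?C {\<kappa> \<in> colorings_with_monomial (A \<union> B) \<alpha>. ?P \<kappa>}"
  proof (rule bij_betwI[where g = "\<lambda>\<kappa>. \<kappa> a"])
    show "\<kappa>\<^sub>c \<in> ?C \<rightarrow> {\<kappa> \<in> colorings_with_monomial (A \<union> B) \<alpha>. ?P \<kappa>}"
      using a disj by (auto simp: colorings_with_monomial_def monomial) (auto simp: \<kappa>\<^sub>c_def)
    show "(\<lambda>\<kappa>. \<kappa> a) \<in> {\<kappa> \<in> colorings_with_monomial (A \<union> B) \<alpha>. ?P \<kappa>} \<rightarrow> ?C"
    proof
      fix \<kappa> assume \<kappa>: "\<kappa> \<in> {\<kappa> \<in> colorings_with_monomial (A \<union> B) \<alpha>. ?P \<kappa>}"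
      then have "coloring_monomial (A \<union> B) \<kappa> = \<alpha>"
        by (simp add: colorings_with_monomial_def)
      then show "\<kappa> a \<in> ?C"
        using monomial[of "\<kappa> a"] coloring[of \<kappa>] \<kappa> by simp
    qed
    show "\<kappa>\<^sub>c c a = c" for c
      using a by (simp add: \<kappa>\<^sub>c_def)
    show "\<kappa>\<^sub>c (\<kappa> a) = \<kappa>" if "\<kappa> \<in> {\<kappa> \<in> colorings_with_monomial (A \<union> B) \<alpha>. ?P \<kappa>}" for \<kappa>
      using coloring that by blast
  qed
  then have "card {\<kappa> \<in> colorings_with_monomial (A \<union> B) \<alpha>. ?P \<kappa>} = card ?C"
    by (rule bij_betw_same_card[symmetric])
  moreover have "coloring_gf (A \<union> B) (\<lambda>\<kappa>. of_bool (\<forall>v\<in>A. \<kappa> v = \<kappa> a) * of_bool (\<forall>v\<in>B. \<kappa> v = - \<kappa> a)) \<alpha>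
      = of_nat (card {\<kappa> \<in> colorings_with_monomial (A \<union> B) \<alpha>. ?P \<kappa>})"
    unfolding coloring_gf_def of_bool_conj[symmetric]
    using A B by (intro sum_of_bool_eq_card finite_colorings_with_monomial) simp
  ultimately show "coloring_gf (A \<union> B)
      (\<lambda>\<kappa>. of_bool (\<forall>v\<in>A. \<kappa> v = \<kappa> a) * of_bool (\<forall>v\<in>B. \<kappa> v = - \<kappa> a)) \<alpha>
      = pab (card A) (card B) \<alpha>"
    by (simp add: pab_def)
qed

lemma colorings_with_monomial_empty:
  "colorings_with_monomial {} \<alpha> = (if \<alpha> = 0 then {\<lambda>_. undefined} else {})"
  by (auto simp: colorings_with_monomial_def coloring_monomial_def)

lemma coloring_gf_empty: "coloring_gf {} (\<lambda>_. 1) = msf_one"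
  by (simp add: fun_eq_iff coloring_gf_def msf_one_def colorings_with_monomial_empty)

lemma coloring_gf_one: "finite V \<Longrightarrow> coloring_gf V (\<lambda>_. 1) = msf_pow (pab 1 0) (card V)"
proof (induction V rule: finite_induct)
  case empty
  then show ?case by (simp add: coloring_gf_empty)
next
  case (insert x V)
  have "pab 1 0 = coloring_gf {x} (\<lambda>_. 1)"
    using coloring_gf_opposite_blocks[of "{x}" "{}" x] by simp
  then have "msf_pow (pab 1 0) (card (insert x V)) =
      msf_mult (coloring_gf {x} (\<lambda>_. 1)) (coloring_gf V (\<lambda>_. 1))"
    using insert by simp
  also have "\<dots> = coloring_gf (insert x V) (\<lambda>_. 1)"
    using insert by (subst coloring_gf_mult_disjoint) auto
  finally show ?case ..
qed

lemma coloring_gf_free_vertices: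
  assumes V: "finite V" and T: "T \<subseteq> V" and W: "\<And>\<kappa>. W (restrict \<kappa> T) = W \<kappa>"
  shows "coloring_gf V W = msf_mult (msf_pow (pab 1 0) (card (V - T))) (coloring_gf T W)"
proof -
  have "coloring_gf V W =
      coloring_gf ((V - T) \<union> T) (\<lambda>\<kappa>. (\<lambda>_. 1) (restrict \<kappa> (V - T)) * W (restrict \<kappa> T))"
    using T by (simp add: W Un_absorb2)
  also have "\<dots> = msf_mult (coloring_gf (V - T) (\<lambda>_. 1)) (coloring_gf T W)"
    using V T by (intro coloring_gf_mult_disjoint[symmetric]) (auto intro: finite_subset)
  finally show ?thesis
    using V by (simp add: coloring_gf_one)
qed

lemma ball_eq_uminus_iff:
  fixes \<kappa> :: "'a \<Rightarrow> 'b :: group_add"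
  assumes "b \<in> B"
  shows "(\<forall>v\<in>B. \<kappa> v = - c) \<longleftrightarrow> (\<forall>v\<in>B. \<kappa> v = \<kappa> b) \<and> c = - \<kappa> b"
proof
  assume all: "\<forall>v\<in>B. \<kappa> v = - c"
  then have "\<kappa> b = - c"
    using assms by blast
  then show "(\<forall>v\<in>B. \<kappa> v = \<kappa> b) \<and> c = - \<kappa> b"
    using all by simp
qed simp

lemma coloring_gf_two_blocks_negative_edge:
  fixes A B :: "'v set"
  assumes A: "finite A" and B: "finite B" and disj: "A \<inter> B = {}" and a: "a \<in> A" and b: "b \<in> B"
  shows "coloring_gf (A \<union> B)
           (\<lambda>\<kappa>. of_bool (\<forall>v\<in>A. \<kappa> v = \<kappa> a) * of_bool (\<forall>v\<in>B. \<kappa> v = \<kappa> b) * of_bool (\<kappa> a \<noteq> - \<kappa> b))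
         = (\<lambda>\<beta>. msf_mult (pab (card A) 0) (pab (card B) 0) \<beta> - pab (card A) (card B) \<beta>)"
proof -
  let ?blockA = "\<lambda>\<kappa>. of_bool (\<forall>v\<in>A. \<kappa> v = \<kappa> a) :: int"
  let ?blockB = "\<lambda>\<kappa>. of_bool (\<forall>v\<in>B. \<kappa> v = \<kappa> b) :: int"
  let ?opposite = "\<lambda>\<kappa>. ?blockA \<kappa> * of_bool (\<forall>v\<in>B. \<kappa> v = - \<kappa> a)"
  have split: "?blockA \<kappa> * ?blockB \<kappa> * of_bool (\<kappa> a \<noteq> - \<kappa> b) =
      ?blockA \<kappa> * ?blockB \<kappa> - ?opposite \<kappa>" for \<kappa> :: "'v \<Rightarrow> int"
    unfolding ball_eq_uminus_iff[OF b] of_bool_conj of_bool_not_iff by (simp only: algebra_simps)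
  have "coloring_gf (A \<union> B) (\<lambda>\<kappa>. ?blockA \<kappa> * ?blockB \<kappa>) =
      coloring_gf (A \<union> B) (\<lambda>\<kappa>. ?blockA (restrict \<kappa> A) * ?blockB (restrict \<kappa> B))"
    using a b by simp
  also have "\<dots> = msf_mult (coloring_gf A ?blockA) (coloring_gf B ?blockB)"
    by (rule coloring_gf_mult_disjoint[OF A B disj, of ?blockA ?blockB, symmetric])
  also have "\<dots> = msf_mult (pab (card A) 0) (pab (card B) 0)"
    using coloring_gf_opposite_blocks[OF A finite.emptyI _ a]
      coloring_gf_opposite_blocks[OF B finite.emptyI _ b]
    by simp
  finally show ?thesis
    unfolding split coloring_gf_diff using coloring_gf_opposite_blocks[OF A B disj a] by simp
qed

lemma of_bool_ball_not_eq_sum_Pow: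
  assumes "finite L"
  shows "(of_bool (\<forall>l\<in>L. \<not> Q l) :: int) = (\<Sum>X\<in>Pow L. (-1) ^ card X * of_bool (\<forall>l\<in>X. Q l))"
proof -
  have of_bool_ball: "of_bool (\<forall>l\<in>X. P l) = (\<Prod>l\<in>X. (of_bool (P l) :: int))" if "finite X" for X P
    using that by (induction X rule: finite_induct) auto
  have "(of_bool (\<forall>l\<in>L. \<not> Q l) :: int) = (\<Prod>l\<in>L. 1 - of_bool (Q l))"
    using assms by (simp add: of_bool_ball of_bool_not_iff)
  also have "\<dots> = (\<Sum>X\<in>Pow L. (-1) ^ card X * (\<Prod>l\<in>X. of_bool (Q l)) * (\<Prod>l\<in>L-X. 1))"
    by (rule prod_diff_conv_sum[OF assms])
  also have "\<dots> = (\<Sum>X\<in>Pow L. (-1) ^ card X * of_bool (\<forall>l\<in>X. Q l))"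
    using assms by (intro sum.cong refl) (auto simp: of_bool_ball finite_subset)
  finally show ?thesis .
qed

lemma sum_Pow_card:
  assumes "finite L"
  shows "(\<Sum>I\<in>Pow L. f (card I)) = (\<Sum>i=0..card L. of_nat (card L choose i) * f i)"
proof -
  have "(\<Sum>I\<in>Pow L. f (card I)) = (\<Sum>i=0..card L. \<Sum>I\<in>{I \<in> Pow L. card I = i}. f (card I))"
    using assms by (intro sum.group[symmetric]) (auto intro: card_mono)
  also have "\<dots> = (\<Sum>i=0..card L. of_nat (card L choose i) * f i)"
    using n_subsets[OF assms] by (intro sum.cong refl) (simp add: Pow_def conj_commute)
  finally show ?thesis .
qed

lemma sum_Pow_Pow_card:
  assumes "finite K" and "finite L"
  shows "(\<Sum>I\<in>Pow K. \<Sum>J\<in>Pow L. f (card I) (card J)) =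
    (\<Sum>i=0..card K. \<Sum>j=0..card L. of_nat (card K choose i) * of_nat (card L choose j) * f i j)"
proof -
  have "(\<Sum>I\<in>Pow K. \<Sum>J\<in>Pow L. f (card I) (card J)) =
      (\<Sum>I\<in>Pow K. \<Sum>j=0..card L. of_nat (card L choose j) * f (card I) j)"
    by (intro sum.cong refl) (rule sum_Pow_card[OF assms(2)])
  also have "\<dots> = (\<Sum>i=0..card K. of_nat (card K choose i) *
      (\<Sum>j=0..card L. of_nat (card L choose j) * f i j))"
    using sum_Pow_card[OF assms(1), of "\<lambda>i. \<Sum>j=0..card L. of_nat (card L choose j) * f i j"] by simp
  finally show ?thesis
    by (simp add: sum_distrib_left mult.assoc)
qed

lemma proper_col_double_star_iff:
  "proper_col (double_star n m) \<kappa> \<longleftrightarrow>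
     (\<forall>l\<in>{1..n}. \<kappa> l \<noteq> \<kappa> 0) \<and> (\<forall>l\<in>{n+2..n+m+1}. \<kappa> l \<noteq> \<kappa> (n+1)) \<and> \<kappa> 0 \<noteq> - \<kappa> (n+1)"
  unfolding proper_col_def double_star_def snd_conv ball_Un by auto

(* The weight of the graph in which the edges from the centers to the leaves of I and J are
  contracted and the other positive edges are deleted. *)
definition contracted_weight :: "nat \<Rightarrow> nat set \<Rightarrow> nat set \<Rightarrow> (nat \<Rightarrow> int) \<Rightarrow> int" where
  "contracted_weight n I J \<kappa> =
     of_bool (\<forall>l\<in>I. \<kappa> l = \<kappa> 0) * of_bool (\<forall>l\<in>J. \<kappa> l = \<kappa> (n+1)) * of_bool (\<kappa> 0 \<noteq> - \<kappa> (n+1))"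

lemma of_bool_proper_col_double_star:
  "of_bool (proper_col (double_star n m) \<kappa>) =
     (\<Sum>I\<in>Pow {1..n}. \<Sum>J\<in>Pow {n+2..n+m+1}. (-1) ^ (card I + card J) * contracted_weight n I J \<kappa>)"
proof -
  have "(of_bool (proper_col (double_star n m) \<kappa>) :: int) =
      of_bool (\<forall>l\<in>{1..n}. \<kappa> l \<noteq> \<kappa> 0) * of_bool (\<forall>l\<in>{n+2..n+m+1}. \<kappa> l \<noteq> \<kappa> (n+1)) *
      of_bool (\<kappa> 0 \<noteq> - \<kappa> (n+1))"
    by (simp only: proper_col_double_star_iff of_bool_conj mult.assoc)
  also have "\<dots> =
      (\<Sum>I\<in>Pow {1..n}. (-1) ^ card I * of_bool (\<forall>l\<in>I. \<kappa> l = \<kappa> 0)) *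
      (\<Sum>J\<in>Pow {n+2..n+m+1}. (-1) ^ card J * of_bool (\<forall>l\<in>J. \<kappa> l = \<kappa> (n+1))) *
      of_bool (\<kappa> 0 \<noteq> - \<kappa> (n+1))"
    by (simp only: of_bool_ball_not_eq_sum_Pow finite_atLeastAtMost)
  also have "\<dots> = (\<Sum>I\<in>Pow {1..n}. \<Sum>J\<in>Pow {n+2..n+m+1}.
      (-1) ^ (card I + card J) * contracted_weight n I J \<kappa>)"
    unfolding sum_product unfolding sum_distrib_right contracted_weight_def power_add
    by (simp only: mult_ac)
  finally show ?thesis .
qed

lemma coloring_gf_contracted_weight:
  assumes I: "I \<subseteq> {1..n}" and J: "J \<subseteq> {n+2..n+m+1}"
  shows "coloring_gf {0..n+m+1} (contracted_weight n I J) =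
    msf_mult (msf_pow (pab 1 0) (n + m - card I - card J))
      (\<lambda>\<beta>. msf_mult (pab (card I + 1) 0) (pab (card J + 1) 0) \<beta> - pab (card I + 1) (card J + 1) \<beta>)"
proof -
  define A where "A = insert 0 I"
  define B where "B = insert (n+1) J"
  have fin: "finite I" "finite J" "finite A" "finite B"
    using I J by (auto simp: A_def B_def intro: finite_subset)
  have "I \<inter> J = {}"
    using I J by fastforce
  then have disj: "A \<inter> B = {}" and sub: "A \<union> B \<subseteq> {0..n+m+1}"
    using I J by (auto simp: A_def B_def)
  have "0 \<notin> I" and "n+1 \<notin> J"
    using I J by auto
  then have card_A: "card A = card I + 1" and card_B: "card B = card J + 1"
    using fin by (simp_all add: A_def B_def)
  have free: "card ({0..n+m+1} - (A \<union> B)) = n + m - card I - card J"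
    using sub fin disj by (simp add: card_Diff_subset card_Un_disjoint card_A card_B)
  have restrict: "contracted_weight n I J (restrict \<kappa> (A \<union> B)) = contracted_weight n I J \<kappa>" for \<kappa>
    by (auto simp: contracted_weight_def A_def B_def)
  have blocks: "contracted_weight n I J = (\<lambda>\<kappa>. of_bool (\<forall>v\<in>A. \<kappa> v = \<kappa> 0) *
      of_bool (\<forall>v\<in>B. \<kappa> v = \<kappa> (n+1)) * of_bool (\<kappa> 0 \<noteq> - \<kappa> (n+1)))"
    by (auto simp: contracted_weight_def A_def B_def fun_eq_iff)
  have "coloring_gf {0..n+m+1} (contracted_weight n I J) =
      msf_mult (msf_pow (pab 1 0) (card ({0..n+m+1} - (A \<union> B))))
        (coloring_gf (A \<union> B) (contracted_weight n I J))"
    using sub restrict by (intro coloring_gf_free_vertices) simp_all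
  moreover have "coloring_gf (A \<union> B) (contracted_weight n I J) =
      (\<lambda>\<beta>. msf_mult (pab (card A) 0) (pab (card B) 0) \<beta> - pab (card A) (card B) \<beta>)"
    unfolding blocks
    by (rule coloring_gf_two_blocks_negative_edge[OF fin(3,4) disj]) (simp_all add: A_def B_def)
  ultimately show ?thesis
    by (simp only: free card_A card_B)
qed

theorem lemma6p6:
  fixes n m :: nat
  shows "chrom_sym (double_star n m) =
    (\<lambda>\<alpha>. \<Sum>i=0..n. \<Sum>j=0..m.
       of_nat (n choose i) * of_nat (m choose j) * (-1) ^ (i + j) *
       msf_mult (msf_pow (pab 1 0) (n + m - i - j))
         (\<lambda>\<beta>. msf_mult (pab (i+1) 0) (pab (j+1) 0) \<beta> - pab (i+1) (j+1) \<beta>) \<alpha>)"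
proof
  fix \<alpha> :: "int \<Rightarrow>\<^sub>0 nat"
  let ?term = "\<lambda>i j. msf_mult (msf_pow (pab 1 0) (n + m - i - j))
         (\<lambda>\<beta>. msf_mult (pab (i+1) 0) (pab (j+1) 0) \<beta> - pab (i+1) (j+1) \<beta>) \<alpha>"
  have vertices: "fst (double_star n m) = {0..n+m+1}"
    by (simp add: double_star_def)
  have cards: "card {1..n} = n" "card {n+2..n+m+1} = m"
    by simp_all
  have "chrom_sym (double_star n m) \<alpha> =
      coloring_gf {0..n+m+1} (\<lambda>\<kappa>. of_bool (proper_col (double_star n m) \<kappa>)) \<alpha>"
    using chrom_sym_eq_coloring_gf[of "double_star n m"]
    by (simp only: vertices finite_atLeastAtMost)
  also have "\<dots> = (\<Sum>I\<in>Pow {1..n}. \<Sum>J\<in>Pow {n+2..n+m+1}.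
      (-1) ^ (card I + card J) * ?term (card I) (card J))"
    by (simp only: of_bool_proper_col_double_star coloring_gf_sum coloring_gf_cmult)
      (intro sum.cong refl, simp only: Pow_iff coloring_gf_contracted_weight)
  also have "\<dots> = (\<Sum>i=0..n. \<Sum>j=0..m.
      of_nat (n choose i) * of_nat (m choose j) * ((-1) ^ (i + j) * ?term i j))"
    using sum_Pow_Pow_card[of "{1..n}" "{n+2..n+m+1}" "\<lambda>i j. (-1) ^ (i + j) * ?term i j"]
    by (simp only: finite_atLeastAtMost cards simp_thms)
  finally show "chrom_sym (double_star n m) \<alpha> = (\<Sum>i=0..n. \<Sum>j=0..m.
      of_nat (n choose i) * of_nat (m choose j) * (-1) ^ (i + j) * ?term i j)"
    by (simp only: mult.assoc)
qed

end
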